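(* Let $p$ be an odd prime, $q=p^m$, and let $k$ be an integer with $0<k<m$. Let $b,c\in\mathbb F_{q^2}$ with $\mathrm N(b)\ne\mathrm N(c)$, let $\ell(x)=(bx^q+cx)^{p^k}$ and $f(x)=x^{q+1}+\ell(x^2)$. Then $f$ is a planar function on $\mathbb F_{q^2}$ if and only if $p^k\equiv1\pmod4$, $m=2k$, and \[\mathrm N(b-c^q)^{\frac{p^k+1}2}=-(\mathrm N(b)-\mathrm N(c))^{p^k+1}.\]
   Context: $\mathrm N$ denotes the norm from $\mathbb F_{q^2}$ to $\mathbb F_q$, $\mathrm N(u)=u^{q+1}$. A function $f$ on $\mathbb F_{q^n}$ is planar if for every $c\in\mathbb F_{q^n}^*$ the map $x\mapsto f(x+c)-f(x)$ is a permutation of $\mathbb F_{q^n}$. *)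

theory Defs
  imports "HOL-Computational_Algebra.Primes"
begin

definition normq :: "nat \<Rightarrow> 'a::field \<Rightarrow> 'a" where
  "normq q u = u ^ (q + 1)"

definition planar :: "('a::{field,finite} \<Rightarrow> 'a) \<Rightarrow> bool" where
  "planar f \<longleftrightarrow> (\<forall>c. c \<noteq> 0 \<longrightarrow> bij (\<lambda>x. f (x + c) - f x))"

end

theory Submission
  imports Defs "HOL-Number_Theory.Residues" "HOL-Computational_Algebra.Polynomial"
begin

(* f(x) = x^(q+1) + l(x^2) is a Dembowski-Ostrom polynomial, so it is planar iff its polar form
   f(x + y) - f(x) - f(y) vanishes only for x = 0 or y = 0.  Writing a zero (x, y) as u = x y,
   v = x y^q (reversible by Hilbert 90) and solving the linear part of l for u shows: f is planar
   iff z - n is a nonzero square of Fq for all z in H = {s^(2(p^k-1)) | s in Fq^*}, where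
   n = N((c^q - b) / (N c - N b)).

   Then all differences between H and n H are nonzero squares, and a quadratic character sum gives
   |H| (|H| + 1) <= q, whereas |H| >= (q - 1) / (2 (p^gcd(k,m) - 1)); this forces m = 2k.  For
   m = 2k, H is the group of s-th roots of unity, s = (p^k + 1) / 2, and Euler's criterion for
   z - n becomes (1 - n^(p^k) z)^s = (z - n)^s on H.  Comparing linear coefficients and evaluating
   at z = 1 gives p^k = 1 (mod 4) and n^s = -1, which is the stated norm condition; conversely
   these two conditions make every z - n a square by Euler's criterion. *)

lemma card_le_card_image_mult:
  assumes "finite A" "\<And>x. x \<in> A \<Longrightarrow> card {x'\<in>A. h x' = h x} \<le> k"
  shows "card A \<le> card (h ` A) * k"
proof -
  have "card A = (\<Sum>y\<in>h ` A. card {x\<in>A. h x = y})"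
    using sum.group[where ?g=h and ?h="\<lambda>_. 1::nat", OF assms(1) finite_imageI[OF assms(1)]]
    by simp
  also have "\<dots> \<le> (\<Sum>y\<in>h ` A. k)"
    by (rule sum_mono) (auto intro: assms(2))
  finally show ?thesis by simp
qed

lemma power_diff_one_eq_one:
  fixes x :: "'a::field"
  assumes "x ^ N = x" "x \<noteq> 0" "0 < N"
  shows "x ^ (N - 1) = 1"
proof -
  have "x * x ^ (N - 1) = x * 1"
    using assms by (simp flip: power_Suc)
  then show ?thesis using assms(2) by simp
qed

lemma roots_power_eq_bound:
  fixes c :: "'a::field"
  assumes "0 < a"
  shows "finite {x. x ^ a = c}" "card {x. x ^ a = c} \<le> a"
proof -
  let ?P = "monom (1::'a) a + [:-c:]"
  have deg: "degree ?P = a" using assms by (simp add: degree_add_eq_left degree_monom_eq)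
  then have "?P \<noteq> 0" using assms by auto
  moreover have "{x. x ^ a = c} = {x. poly ?P x = 0}" by (auto simp: poly_monom algebra_simps)
  ultimately show "finite {x. x ^ a = c}" "card {x. x ^ a = c} \<le> a"
    using poly_roots_finite[of ?P] card_poly_roots_bound[of ?P] deg by simp_all
qed

lemma card_roots_power_plus_linear:
  fixes c :: "'a::field"
  assumes "1 < a"
  shows "card {x. x ^ a + c * x = 0} \<le> a"
proof -
  let ?P = "monom (1::'a) a + [:0, c:]"
  have deg: "degree ?P = a" using assms by (simp add: degree_add_eq_left degree_monom_eq)
  then have "?P \<noteq> 0" using assms by auto
  moreover have "{x. x ^ a + c * x = 0} = {x. poly ?P x = 0}" by (auto simp: poly_monom algebra_simps)
  ultimately show ?thesis using card_poly_roots_bound[of ?P] deg by simp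
qed

lemma card_le_card_power_image_mult:
  fixes G :: "'a::field set"
  assumes "finite G" "0 \<notin> G" "\<And>x y. x \<in> G \<Longrightarrow> y \<in> G \<Longrightarrow> x / y \<in> G"
    "\<And>x y. x \<in> G \<Longrightarrow> y \<in> G \<Longrightarrow> x * y \<in> G"
  shows "card G \<le> card ((\<lambda>x. x ^ e) ` G) * card {w\<in>G. w ^ e = 1}"
proof (rule card_le_card_image_mult[OF assms(1)])
  fix x assume x: "x \<in> G"
  have x0: "x \<noteq> 0" using x assms(2) by auto
  have "{x'\<in>G. x' ^ e = x ^ e} = (\<lambda>w. x * w) ` {w\<in>G. w ^ e = 1}"
  proof safe
    fix x' assume "x' \<in> G" "x' ^ e = x ^ e"
    then show "x' \<in> (\<lambda>w. x * w) ` {w \<in> G. w ^ e = 1}"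
      using x0 assms(3)[OF \<open>x' \<in> G\<close> x]
      by (intro image_eqI[of _ _ "x'/x"]) (auto simp: power_divide)
  next
    fix w assume "w \<in> G" "w ^ e = 1"
    then show "x * w \<in> G" "(x * w) ^ e = x ^ e" using assms(4) x by (auto simp: power_mult_distrib)
  qed
  also have "card \<dots> = card {w\<in>G. w ^ e = 1}"
    by (rule card_image) (use x0 in \<open>auto intro: inj_onI\<close>)
  finally show "card {x'\<in>G. x' ^ e = x ^ e} \<le> card {w\<in>G. w ^ e = 1}" by simp
qed

text \<open>The image has at least \<open>d\<close> elements because the kernel has at most \<open>e\<close>, and there are
  at most \<open>d\<close> roots of unity.\<close>
lemma power_image_eq_roots_of_unity:
  fixes G :: "'a::field set"
  assumes G: "finite G" "0 \<notin> G" "\<And>x y. x \<in> G \<Longrightarrow> y \<in> G \<Longrightarrow> x / y \<in> G"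
      "\<And>x y. x \<in> G \<Longrightarrow> y \<in> G \<Longrightarrow> x * y \<in> G"
    and card_G: "card G = e * d" and e: "0 < e" and d: "0 < d"
    and order: "\<And>x. x \<in> G \<Longrightarrow> x ^ (e * d) = 1"
  shows "(\<lambda>x. x ^ e) ` G = {y. y ^ d = 1}" and "card {y::'a. y ^ d = 1} = d"
proof -
  let ?I = "(\<lambda>x. x ^ e) ` G"
  have sub: "?I \<subseteq> {y. y ^ d = 1}" using order by (auto simp: power_mult)
  have "card {w\<in>G. w ^ e = 1} \<le> card {w::'a. w ^ e = 1}"
    by (intro card_mono roots_power_eq_bound e) auto
  also have "\<dots> \<le> e" by (rule roots_power_eq_bound[OF e])
  finally have "e * d \<le> card ?I * e"
    using card_le_card_power_image_mult[OF G, of e] card_G by (metis le_trans mult_le_mono2)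
  then have lower: "d \<le> card ?I" using e by (simp add: mult.commute)
  have mono: "card ?I \<le> card {y::'a. y ^ d = 1}"
    using sub by (intro card_mono roots_power_eq_bound d)
  have upper: "card {y::'a. y ^ d = 1} \<le> d" by (rule roots_power_eq_bound[OF d])
  show "card {y::'a. y ^ d = 1} = d" using lower mono upper by linarith
  show "?I = {y. y ^ d = 1}"
    using sub lower mono upper by (intro card_subset_eq roots_power_eq_bound d) auto
qed

lemma power_power_swap: "((z::'a::monoid_mult) ^ a) ^ b = (z ^ b) ^ a"
  by (simp flip: power_mult add: mult.commute)

text \<open>The polynomial \<open>(1 + a X) ^ s - (X - n) ^ s - (a ^ s - 1) (X ^ s - 1)\<close> has degree below \<open>s\<close>
  and vanishes at all \<open>s\<close>-th roots of unity, so it is zero; its linear coefficient gives the claim.\<close>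
lemma linear_coeff_eq_if_powers_agree_on_roots_of_unity:
  fixes a n :: "'a::field"
  assumes s: "2 \<le> s" and char: "of_nat s \<noteq> (0::'a)" and roots: "s \<le> card {z::'a. z ^ s = 1}"
    and agree: "\<And>z. z ^ s = 1 \<Longrightarrow> (1 + a * z) ^ s = (z - n) ^ s"
  shows "a = (- n) ^ (s - 1)"
proof -
  define R where "R = [:1, a:] ^ s - [:- n, 1:] ^ s - smult (a ^ s - 1) (monom 1 s - 1)"
  have coeff_R: "coeff R j = of_nat (s choose j) * a ^ j - of_nat (s choose j) * (- n) ^ (s - j)
      - (a ^ s - 1) * ((if j = s then 1 else 0) - (if j = 0 then 1 else 0))" if "j \<le> s" for j
    unfolding R_def using that by (simp add: coeff_linear_poly_power coeff_monom coeff_1)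
  have "R = 0"
  proof (rule ccontr)
    assume "R \<noteq> 0"
    have "degree R \<le> s"
      unfolding R_def
      by (intro degree_diff_le order.trans[OF degree_power_le] order.trans[OF degree_smult_le])
        (auto intro: order.trans[OF degree_diff_le] simp: degree_monom_le)
    moreover have "coeff R s = 0" using coeff_R[of s] s by simp
    ultimately have "degree R < s" using \<open>R \<noteq> 0\<close> leading_coeff_0_iff[of R] le_neq_implies_less by metis
    moreover have "{z::'a. z ^ s = 1} \<subseteq> {z. poly R z = 0}"
    proof
      fix z :: 'a assume "z \<in> {z. z ^ s = 1}"
      then show "z \<in> {z. poly R z = 0}" using agree[of z] by (simp add: R_def poly_monom mult.commute)
    qed
    then have "s \<le> card {z. poly R z = 0}"
      using roots card_mono[OF poly_roots_finite[OF \<open>R \<noteq> 0\<close>]] by (meson le_trans)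
    ultimately show False using card_poly_roots_bound[OF \<open>R \<noteq> 0\<close>] by simp
  qed
  then have "of_nat s * a - of_nat s * (- n) ^ (s - 1) = (0::'a)"
    using coeff_R[of 1] s by simp
  then have "of_nat s * (a - (- n) ^ (s - 1)) = (0::'a)" by (simp add: right_diff_distrib)
  then have "a - (- n) ^ (s - 1) = 0" using char by simp
  then show ?thesis by simp
qed

lemma cubic_square_bounds_contradiction:
  fixes T U Y :: int
  assumes T: "3 \<le> T" and U: "1 \<le> U" and lower: "U * T ^ 3 - 1 \<le> 2 * Y * (T - 1)"
    and upper: "Y * Y + Y \<le> U * T ^ 3"
  shows False
proof -
  have UT: "1 \<le> U * T" using mult_mono[of 1 U 1 T] T U by simp
  have "(T - 1) * (U * T * (T + 1)) = U * T ^ 3 - U * T"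
    by (simp add: algebra_simps power3_eq_cube)
  also have "\<dots> \<le> (T - 1) * (2 * Y)" using lower UT by (simp add: mult.commute)
  finally have Y_lower: "U * T * (T + 1) \<le> 2 * Y" using T by (simp add: mult_le_cancel_left)
  have "0 \<le> U * T * (T + 1)" using T U by simp
  then have "(U * T * (T + 1)) * (U * T * (T + 1)) \<le> (2 * Y) * (2 * Y)"
    using mult_mono[OF Y_lower Y_lower] Y_lower by simp
  moreover have "4 * (U * T ^ 3) \<le> (U * T * (T + 1)) * (U * T * (T + 1))"
  proof -
    have "4 * T \<le> (T + 1) * (T + 1)" using zero_le_square[of "T - 1"] by (simp add: algebra_simps)
    moreover have "U \<le> U * U" using mult_left_mono[of 1 U U] U by simp
    ultimately have "(U * T * T) * (4 * T) \<le> (U * U * T * T) * ((T + 1) * (T + 1))"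
      using T U by (intro mult_mono) (auto intro: mult_right_mono)
    then show ?thesis by (simp add: algebra_simps power3_eq_cube)
  qed
  ultimately have "U * T ^ 3 \<le> Y * Y" by simp
  moreover have "1 \<le> U * T * (T + 1)" using mult_mono[of 1 "U * T" 1 "T + 1"] UT T by simp
  ultimately show False using upper Y_lower by simp
qed

lemma exponent_le_2_if_square_bound:
  fixes t D Y :: nat
  assumes t: "3 \<le> t" and lower: "t ^ D - 1 \<le> 2 * Y * (t - 1)" and upper: "Y * Y + Y \<le> t ^ D"
  shows "D \<le> 2"
proof (rule ccontr)
  assume "\<not> D \<le> 2"
  then have "D = (D - 3) + 3" by simp
  then have tD: "t ^ D = t ^ (D - 3) * t ^ 3" by (metis power_add)
  show False
  proof (rule cubic_square_bounds_contradiction[of "int t" "int (t ^ (D - 3))" "int Y"])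
    show "3 \<le> int t" "1 \<le> int (t ^ (D - 3))" using t by simp_all
    have "int (t ^ D - 1) \<le> int (2 * Y * (t - 1))" using lower by (simp only: of_nat_le_iff)
    moreover have "1 \<le> t ^ D" using t by simp
    ultimately show "int (t ^ (D - 3)) * int t ^ 3 - 1 \<le> 2 * int Y * (int t - 1)"
      using t by (simp add: of_nat_diff tD)
    have "int (Y * Y + Y) \<le> int (t ^ D)" using upper by (simp only: of_nat_le_iff)
    then show "int Y * int Y + int Y \<le> int (t ^ (D - 3)) * int t ^ 3" by (simp add: tD)
  qed
qed

lemma planar_iff_trivial_kernel:
  fixes f :: "'a::{field,finite} \<Rightarrow> 'a"
  assumes polar: "\<And>x y. f (x + y) = f x + f y + B x y"
    and additive: "\<And>x x' y. B x y - B x' y = B (x - x') y"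
  shows "planar f \<longleftrightarrow> (\<forall>x y. y \<noteq> 0 \<longrightarrow> B x y = 0 \<longrightarrow> x = 0)"
proof -
  have B0: "B 0 y = 0" for y using additive[where x = 0 and x' = 0 and y = y] by simp
  have "inj (\<lambda>x. f (x + y) - f x) \<longleftrightarrow> (\<forall>x. B x y = 0 \<longrightarrow> x = 0)" for y
  proof -
    have "inj (\<lambda>x. f (x + y) - f x) \<longleftrightarrow> inj (\<lambda>x. B x y)"
      using polar by (simp add: inj_def)
    also have "\<dots> \<longleftrightarrow> (\<forall>x. B x y = 0 \<longrightarrow> x = 0)"
    proof
      assume inj: "inj (\<lambda>x. B x y)"
      show "\<forall>x. B x y = 0 \<longrightarrow> x = 0"
      proof (intro allI impI)
        fix x assume "B x y = 0"
        then have "B x y = B 0 y" using B0 by simp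
        with inj show "x = 0" by (rule injD)
      qed
    next
      assume kernel: "\<forall>x. B x y = 0 \<longrightarrow> x = 0"
      show "inj (\<lambda>x. B x y)"
      proof (rule injI)
        fix x x' assume "B x y = B x' y"
        then have "B (x - x') y = 0" using additive[of x y x'] by simp
        then have "x - x' = 0" using kernel by blast
        then show "x = x'" by simp
      qed
    qed
    finally show ?thesis .
  qed
  moreover have "bij g \<longleftrightarrow> inj g" for g :: "'a \<Rightarrow> 'a"
    using finite_UNIV_inj_surj[of g] by (auto simp: bij_def)
  ultimately show ?thesis unfolding planar_def by blast
qed

locale field_q2 =
  fixes p m q :: nat and field_type :: "'a::{field,finite} itself"
  assumes prime_p: "prime p" and odd_p: "odd p" and q_eq: "q = p ^ m" and m_pos: "0 < m"
    and card_field: "card (UNIV :: 'a set) = q ^ 2"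
begin

abbreviation Fq :: "'a set" where "Fq \<equiv> {x. x ^ q = x}"

definition Fq_powers :: "nat \<Rightarrow> 'a set" where
  "Fq_powers e = (\<lambda>s. s ^ e) ` (Fq - {0})"

lemma CHAR_eq: "CHAR('a) = p"
proof -
  have "prime CHAR('a)" by (rule prime_CHAR_semidom) (simp add: finite_imp_CHAR_pos)
  moreover have "CHAR('a) dvd p ^ (m * 2)"
    using CHAR_dvd_CARD[where ?'a='a] card_field q_eq by (simp add: power_mult)
  ultimately show ?thesis using prime_p prime_dvd_power primes_dvd_imp_eq by blast
qed

lemma frobenius_add: "(x + y :: 'a) ^ (p ^ j) = x ^ (p ^ j) + y ^ (p ^ j)"
  using freshmans_dream'[where ?'a='a and m="p ^ j" and n=j] CHAR_eq prime_p by simp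

lemma frobenius_minus: "(- x :: 'a) ^ (p ^ j) = - (x ^ (p ^ j))"
  using odd_p by (simp add: power_minus_odd)

lemma frobenius_diff: "(x - y :: 'a) ^ (p ^ j) = x ^ (p ^ j) - y ^ (p ^ j)"
  using frobenius_add[of x "- y"] frobenius_minus[of y] by simp

lemma frobenius_inj: "(x :: 'a) ^ (p ^ j) = y ^ (p ^ j) \<Longrightarrow> x = y"
  using frobenius_diff[of x y j] by simp

lemmas power_q_add = frobenius_add[of _ _ m, folded q_eq]

lemmas power_q_minus = frobenius_minus[of _ m, folded q_eq]

lemmas power_q_diff = frobenius_diff[of _ _ m, folded q_eq]

lemma frobenius_two: "(2::'a) ^ (p ^ j) = 2"
  using frobenius_add[of 1 1 j] by simp

lemmas power_q_two = frobenius_two[of m, folded q_eq]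

lemma two_nonzero: "(2::'a) \<noteq> 0"
proof
  assume "(2::'a) = 0"
  then have "p dvd 2" using of_nat_eq_0_iff_char_dvd[of 2, where ?'a='a] CHAR_eq by simp
  then show False using primes_dvd_imp_eq[OF prime_p two_is_prime_nat] odd_p by simp
qed

lemma one_neq_minus_one: "(1::'a) \<noteq> - 1"
  using two_nonzero by (metis one_add_one add_eq_0_iff2)

lemma p_ge_3: "3 \<le> p"
  using prime_p odd_p prime_ge_2_nat[of p] by presburger

lemma p_power_ge_3: "0 < j \<Longrightarrow> 3 \<le> p ^ j"
  using p_ge_3 self_le_power[of p j] by simp

lemma q_ge_3: "3 \<le> q"
  using p_power_ge_3[OF m_pos] q_eq by simp

lemma odd_q: "odd q" using q_eq odd_p by simp

lemma two_half_q_minus_one: "2 * ((q - 1) div 2) = q - 1"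
  using odd_q by presburger

lemma zero_in_Fq: "(0::'a) ^ q = 0" using q_ge_3 by simp

lemma power_card_field: "(x :: 'a) ^ (q ^ 2) = x"
proof (cases "x = 0")
  case False
  have "x * (\<Prod>y\<in>UNIV-{0}. x * y) = x * x ^ (card (UNIV :: 'a set) - 1) * \<Prod>(UNIV-{0})"
    by (simp add: prod.distrib mult_ac)
  also have "x * x ^ (card (UNIV :: 'a set) - 1) = x ^ card (UNIV :: 'a set)"
    using finite_UNIV_card_ge_0[where ?'a = 'a] by (simp flip: power_Suc)
  also have "(\<Prod>y\<in>UNIV-{0}. x * y) = (\<Prod>y\<in>UNIV-{0}. y)"
    by (rule prod.reindex_bij_witness[of _ "\<lambda>y. y / x" "\<lambda>y. x * y"]) (use False in auto)
  finally show ?thesis using card_field by simp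
qed (use q_ge_3 in auto)

lemma power_q_power_q [simp]: "((x :: 'a) ^ q) ^ q = x"
  using power_card_field[of x] by (simp flip: power_mult add: power2_eq_square)

lemma norm_in_Fq: "((x :: 'a) ^ (q + 1)) ^ q = x ^ (q + 1)"
  by (simp add: power_mult_distrib power_power_swap[of x q] mult.commute)

text \<open>The additive map \<open>x \<mapsto> x ^ q - x\<close> has kernel \<open>Fq\<close> and takes values among the at most
  \<open>q\<close> roots of \<open>y ^ q + y\<close>.\<close>
lemma card_Fq: "card Fq = q"
proof -
  let ?h = "\<lambda>x::'a. x ^ q - x"
  have fibre: "card {x'\<in>UNIV. ?h x' = ?h x} = card Fq" for x
  proof -
    have "{x'\<in>UNIV. ?h x' = ?h x} = (\<lambda>f. f + x) ` Fq"
    proof safe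
      fix x' :: 'a assume "x' ^ q - x' = x ^ q - x"
      then show "x' \<in> (\<lambda>f. f + x) ` Fq"
        by (intro image_eqI[of _ _ "x' - x"]) (auto simp: power_q_diff algebra_simps)
    next
      fix f :: 'a assume "f ^ q = f"
      then show "(f + x) ^ q - (f + x) = x ^ q - x" by (simp add: power_q_add)
    qed simp
    also have "card \<dots> = card Fq" by (rule card_image) (auto intro: inj_onI)
    finally show ?thesis .
  qed
  have "card (?h ` UNIV) \<le> card {y::'a. y ^ q + y = 0}"
    by (intro card_mono) (auto simp: power_q_diff)
  also have "\<dots> \<le> q" using card_roots_power_plus_linear[of q "1::'a"] q_ge_3 by simp
  finally have "q * card Fq \<ge> card (?h ` UNIV) * card Fq" by (rule mult_le_mono1)
  moreover have "card (?h ` UNIV) * card Fq \<ge> q * q"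
    using card_le_card_image_mult[of UNIV ?h] fibre card_field by (simp add: power2_eq_square)
  ultimately have "q * q \<le> q * card Fq" by linarith
  then have "q \<le> card Fq" using q_ge_3 by simp
  moreover have "Fq = {x. x ^ q + (- 1) * x = 0}" by auto
  then have "card Fq \<le> q" using card_roots_power_plus_linear[of q "- 1"] q_ge_3 by simp
  ultimately show ?thesis by simp
qed

section \<open>Powers in \<open>Fq\<close>: Euler's criterion and Hilbert 90\<close>
lemma Fq_powers_eq_roots_of_unity:
  assumes "e * d = q - 1"
  shows "Fq_powers e = {y. y ^ d = 1}" and "card {y::'a. y ^ d = 1} = d"
proof -
  have card: "card (Fq - {0}) = e * d" using card_Fq zero_in_Fq assms by (simp add: card_Diff_singleton)
  have pos: "0 < e" "0 < d" using assms q_ge_3 by (auto intro: gr0I)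
  have order: "x ^ (e * d) = 1" if "x \<in> Fq - {0}" for x
    using that power_diff_one_eq_one[of x q] q_ge_3 assms by simp
  show "Fq_powers e = {y. y ^ d = 1}" unfolding Fq_powers_def
    by (rule power_image_eq_roots_of_unity(1)[OF _ _ _ _ card pos order])
      (auto simp: power_divide power_mult_distrib)
  show "card {y::'a. y ^ d = 1} = d"
    by (rule power_image_eq_roots_of_unity(2)[OF _ _ _ _ card pos order])
      (auto simp: power_divide power_mult_distrib)
qed

theorem Euler_criterion: "a \<in> Fq_powers 2 \<longleftrightarrow> a ^ ((q - 1) div 2) = 1"
  using Fq_powers_eq_roots_of_unity(1)[OF two_half_q_minus_one] by simp

lemma field_units_power_image:
  assumes "e * d = q ^ 2 - 1" "0 < e"
  shows "(\<lambda>x. x ^ e) ` (UNIV - {0 :: 'a}) = {y. y ^ d = 1}"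
proof (rule power_image_eq_roots_of_unity(1))
  show "card (UNIV - {0 :: 'a}) = e * d" using card_field assms by (simp add: card_Diff_singleton)
  have "1 < q ^ 2" using q_ge_3 by (simp add: power2_eq_square less_le_trans[OF _ le_square])
  then show "0 < d" using assms by (auto intro: gr0I)
  show "x ^ (e * d) = 1" if "x \<in> UNIV - {0}" for x :: 'a
    using that power_diff_one_eq_one[OF power_card_field] q_ge_3 assms by simp
qed (use assms in auto)

lemma q_squared_minus_one: "q ^ 2 - 1 = (q - 1) * (q + 1)"
  using q_ge_3 by (simp add: power2_eq_square algebra_simps)

lemma Fq_element_is_square:
  assumes "(a::'a) ^ q = a"
  shows "\<exists>b. b ^ 2 = a"
proof (cases "a = 0")
  case False
  have "2 * ((q + 1) div 2) = q + 1" using odd_q by simp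
  then have "(q - 1) * (q + 1) = 2 * ((q - 1) * ((q + 1) div 2))" by (metis mult.left_commute)
  moreover have "a ^ ((q - 1) * ((q + 1) div 2)) = 1"
    using power_diff_one_eq_one[OF assms False] q_ge_3 by (simp add: power_mult)
  ultimately have "a \<in> (\<lambda>x. x ^ 2) ` (UNIV - {0})"
    using field_units_power_image[of 2] q_squared_minus_one by simp
  then show ?thesis by blast
qed auto

theorem Hilbert_90:
  assumes "(v::'a) ^ (q + 1) = 1"
  shows "\<exists>c. c \<noteq> 0 \<and> c ^ (q - 1) = v"
proof -
  have "v \<in> (\<lambda>x. x ^ (q - 1)) ` (UNIV - {0})"
    using field_units_power_image[of "q - 1" "q + 1"] q_squared_minus_one q_ge_3 assms by simp
  then show ?thesis by blast
qed

lemma sqrt_of_Fq_nonsquare: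
  assumes "(\<delta>::'a) ^ q = \<delta>" "\<delta> \<notin> Fq_powers 2"
  shows "\<exists>\<epsilon>. \<epsilon> ^ 2 = \<delta> \<and> \<epsilon> ^ q = - \<epsilon>"
proof -
  obtain \<epsilon> where \<epsilon>: "\<epsilon> ^ 2 = \<delta>" using Fq_element_is_square[OF assms(1)] by blast
  have "(\<epsilon> ^ q) ^ 2 = \<epsilon> ^ 2" using \<epsilon> assms(1) by (simp add: power_power_swap[of \<epsilon> q])
  then have "\<epsilon> ^ q = \<epsilon> \<or> \<epsilon> ^ q = - \<epsilon>" by (simp add: power2_eq_iff)
  moreover have "\<epsilon> ^ q \<noteq> \<epsilon> \<or> \<epsilon> = 0"
  proof (rule ccontr)
    assume "\<not> (\<epsilon> ^ q \<noteq> \<epsilon> \<or> \<epsilon> = 0)"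
    then have "\<delta> \<in> Fq_powers 2" unfolding Fq_powers_def using \<epsilon> by (intro image_eqI[of _ _ \<epsilon>]) auto
    then show False using assms(2) by simp
  qed
  ultimately show ?thesis using \<epsilon> zero_in_Fq by auto
qed

lemma Fq_powers_subset: "Fq_powers e \<subseteq> Fq - {0}"
  unfolding Fq_powers_def by (auto simp: power_power_swap[of _ e q])

lemma square_in_Fq_powers_2: "(a::'a) ^ q = a \<Longrightarrow> a \<noteq> 0 \<Longrightarrow> a * a \<in> Fq_powers 2"
  unfolding Fq_powers_def by (auto simp: power2_eq_square)

lemma Fq_powers_mult:
  assumes "a \<in> Fq_powers e" "b \<in> Fq_powers e"
  shows "a * b \<in> Fq_powers e"
proof -
  obtain s t where "s \<in> Fq - {0}" "t \<in> Fq - {0}" "a = s ^ e" "b = t ^ e"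
    using assms by (auto simp: Fq_powers_def)
  then show ?thesis
    unfolding Fq_powers_def by (intro image_eqI[of _ _ "s * t"]) (auto simp: power_mult_distrib)
qed

lemma Fq_powers_divide:
  assumes "a \<in> Fq_powers e" "b \<in> Fq_powers e"
  shows "a / b \<in> Fq_powers e"
proof -
  obtain s t where "s \<in> Fq - {0}" "t \<in> Fq - {0}" "a = s ^ e" "b = t ^ e"
    using assms by (auto simp: Fq_powers_def)
  then show ?thesis
    unfolding Fq_powers_def by (intro image_eqI[of _ _ "s / t"]) (auto simp: power_divide)
qed

lemma Fq_powers_double: "Fq_powers (2 * e) = (\<lambda>y. y ^ 2) ` Fq_powers e"
  unfolding Fq_powers_def image_image by (simp flip: power_mult add: mult.commute)

section \<open>The quadratic character of \<open>Fq\<close>\<close>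

definition quad_char :: "'a \<Rightarrow> int" where
  "quad_char a = (if a = 0 then 0 else if a \<in> Fq_powers 2 then 1 else -1)"

lemma quad_char_Fq_powers_2: "a \<in> Fq_powers 2 \<Longrightarrow> quad_char a = 1"
  using Fq_powers_subset by (auto simp: quad_char_def)

lemma of_int_quad_char:
  assumes "(a::'a) ^ q = a"
  shows "of_int (quad_char a) = a ^ ((q - 1) div 2)"
proof -
  consider "a = 0" | "a \<in> Fq_powers 2" | "a \<noteq> 0" "a \<notin> Fq_powers 2" by blast
  then show ?thesis
  proof cases
    case 1
    then show ?thesis using q_ge_3 by (simp add: quad_char_def)
  next
    case 2
    then show ?thesis using Euler_criterion quad_char_Fq_powers_2 by simp
  next
    case 3
    have "(a ^ ((q - 1) div 2)) ^ 2 = a ^ (2 * ((q - 1) div 2))"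
      by (simp flip: power_mult add: mult.commute)
    also have "\<dots> = 1"
      using power_diff_one_eq_one[OF assms 3(1)] q_ge_3 by (simp only: two_half_q_minus_one)
    finally have "(a ^ ((q - 1) div 2)) ^ 2 = 1" .
    then show ?thesis using 3 Euler_criterion by (auto simp: quad_char_def power2_eq_1_iff)
  qed
qed

lemma quad_char_mult:
  assumes "(a::'a) ^ q = a" "b ^ q = b"
  shows "quad_char (a * b) = quad_char a * quad_char b"
proof -
  have eq: "of_int (quad_char (a * b)) = (of_int (quad_char a * quad_char b) :: 'a)"
    using of_int_quad_char assms by (simp add: power_mult_distrib)
  have inj: "inj_on (of_int :: int \<Rightarrow> 'a) {-1, 0, 1}"
    using one_neq_minus_one by (auto simp: inj_on_def)
  have "quad_char (a * b) \<in> {-1, 0, 1}" "quad_char a * quad_char b \<in> {-1, 0, 1}"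
    by (auto simp: quad_char_def)
  then show ?thesis using inj_onD[OF inj eq] by blast
qed

lemma exists_Fq_nonsquare: "\<exists>g::'a. g ^ q = g \<and> g \<noteq> 0 \<and> g \<notin> Fq_powers 2"
proof -
  have "card (Fq_powers 2) \<le> (q - 1) div 2"
    using Fq_powers_eq_roots_of_unity[OF two_half_q_minus_one]
      roots_power_eq_bound(2)[of "(q - 1) div 2" "1::'a"] q_ge_3 by simp
  moreover have "card (Fq - {0}) = q - 1" using card_Fq zero_in_Fq by (simp add: card_Diff_singleton)
  ultimately have "\<not> Fq - {0} \<subseteq> Fq_powers 2"
    using card_mono[of "Fq_powers 2" "Fq - {0}"] q_ge_3 by auto
  then show ?thesis by auto
qed

lemma quad_char_sum: "(\<Sum>a\<in>Fq. quad_char a) = 0"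
proof -
  obtain g :: 'a where g: "g ^ q = g" "g \<noteq> 0" "g \<notin> Fq_powers 2"
    using exists_Fq_nonsquare by blast
  have g_char: "quad_char g = -1" using g by (simp add: quad_char_def)
  have "(\<Sum>a\<in>Fq. quad_char a) = (\<Sum>a\<in>Fq. quad_char (g * a))"
    by (rule sum.reindex_bij_witness[of _ "\<lambda>a. g * a" "\<lambda>a. a / g"])
       (use g in \<open>auto simp: power_mult_distrib power_divide\<close>)
  also have "\<dots> = (\<Sum>a\<in>Fq. - quad_char a)"
    by (rule sum.cong) (use g g_char in \<open>auto simp: quad_char_mult\<close>)
  finally show ?thesis by (simp add: sum_negf)
qed

lemma sum_Fq_ratio_reindex:
  assumes b: "(b::'a) ^ q = b" and b': "b' ^ q = b'" and bb': "b \<noteq> b'"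
  shows "(\<Sum>x\<in>Fq - {b'}. g ((x - b) / (x - b'))) = (\<Sum>z\<in>Fq - {1}. g z)"
proof (rule sum.reindex_bij_witness[of _ "\<lambda>z. b' + (b' - b) / (z - 1)" "\<lambda>x. (x - b) / (x - b')"])
  fix z assume z: "z \<in> Fq - {1}"
  then have z1: "z - 1 \<noteq> 0" by auto
  have "b' + (b' - b) / (z - 1) - b = (b' - b) * z / (z - 1)" using z1 by (simp add: field_simps)
  moreover have "b' + (b' - b) / (z - 1) - b' = (b' - b) / (z - 1)" by simp
  ultimately show "(b' + (b' - b) / (z - 1) - b) / (b' + (b' - b) / (z - 1) - b') = z"
    using z1 bb' by simp
  show "b' + (b' - b) / (z - 1) \<in> Fq - {b'}"
    using z z1 bb' b b' by (auto simp: power_q_add power_q_diff power_divide)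
next
  fix x assume x: "x \<in> Fq - {b'}"
  then have x1: "x - b' \<noteq> 0" by auto
  show "b' + (b' - b) / ((x - b) / (x - b') - 1) = x"
    using x1 bb' by (simp add: field_simps)
  have "(x - b) / (x - b') \<noteq> 1" using x1 bb' by (simp add: divide_eq_1_iff)
  then show "(x - b) / (x - b') \<in> Fq - {1}"
    using x x1 b b' by (auto simp: power_q_diff power_divide)
qed simp

lemma quad_char_shift_correlation:
  assumes b: "(b::'a) ^ q = b" and b': "b' ^ q = b'" and bb': "b \<noteq> b'"
  shows "(\<Sum>x\<in>Fq. quad_char (x - b) * quad_char (x - b')) = -1"
proof -
  have "(\<Sum>x\<in>Fq. quad_char (x - b) * quad_char (x - b'))
      = (\<Sum>x\<in>Fq - {b'}. quad_char (x - b) * quad_char (x - b'))"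
    by (rule sum.mono_neutral_right) (auto simp: quad_char_def)
  also have "\<dots> = (\<Sum>x\<in>Fq - {b'}. quad_char ((x - b) / (x - b')))"
  proof (intro sum.cong refl)
    fix x assume x: "x \<in> Fq - {b'}"
    then have xF: "x ^ q = x" and xb: "x - b' \<noteq> 0" by auto
    have "quad_char (x - b) * quad_char (x - b') = quad_char ((x - b) * (x - b'))"
      using xF b b' by (simp add: quad_char_mult power_q_diff)
    also have "(x - b) * (x - b') = ((x - b) / (x - b')) * ((x - b') * (x - b'))" using xb by simp
    also have "quad_char \<dots> = quad_char ((x - b) / (x - b')) * quad_char ((x - b') * (x - b'))"
      by (rule quad_char_mult) (use xF b b' in \<open>simp_all add: power_q_diff power_divide power_mult_distrib\<close>)
    also have "quad_char ((x - b') * (x - b')) = 1"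
      using xF b' xb by (simp add: square_in_Fq_powers_2 quad_char_Fq_powers_2 power_q_diff)
    finally show "quad_char (x - b) * quad_char (x - b') = quad_char ((x - b) / (x - b'))" by simp
  qed
  also have "\<dots> = (\<Sum>z\<in>Fq - {1}. quad_char z)" using b b' bb' by (rule sum_Fq_ratio_reindex)
  also have "\<dots> = (\<Sum>z\<in>Fq. quad_char z) - quad_char 1" by (subst sum_diff1) auto
  finally show ?thesis
    using quad_char_sum quad_char_Fq_powers_2[OF square_in_Fq_powers_2[of 1]] by simp
qed

lemma quad_char_shift_square_sum:
  assumes "(b::'a) ^ q = b"
  shows "(\<Sum>x\<in>Fq. quad_char (x - b) * quad_char (x - b)) = int q - 1"
proof -
  have "(\<Sum>x\<in>Fq. quad_char (x - b) * quad_char (x - b)) = (\<Sum>x\<in>Fq - {b}. 1)"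
  proof (rule sum.mono_neutral_cong_right)
    fix x assume "x \<in> Fq - {b}"
    then show "quad_char (x - b) * quad_char (x - b) = 1"
      using assms by (auto simp: quad_char_def)
  qed (auto simp: quad_char_def)
  also have "\<dots> = int (card (Fq - {b}))" by simp
  also have "card (Fq - {b}) = q - 1" using assms card_Fq by (simp add: card_Diff_singleton)
  finally show ?thesis using q_ge_3 by simp
qed

lemma sum_square_quad_char_sums:
  assumes B: "B \<subseteq> Fq"
  shows "(\<Sum>x\<in>Fq. (\<Sum>b\<in>B. quad_char (x - b)) ^ 2) = int (card B) * (int q - int (card B))"
proof -
  have "(\<Sum>x\<in>Fq. (\<Sum>b\<in>B. quad_char (x - b)) ^ 2)
      = (\<Sum>b\<in>B. \<Sum>b'\<in>B. \<Sum>x\<in>Fq. quad_char (x - b) * quad_char (x - b'))"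
    by (simp add: power2_eq_square sum_product sum.swap[of _ Fq] mult.commute)
  also have "\<dots> = (\<Sum>b\<in>B. int q - int (card B))"
  proof (rule sum.cong)
    fix b assume b: "b \<in> B"
    have "(\<Sum>b'\<in>B. \<Sum>x\<in>Fq. quad_char (x - b) * quad_char (x - b'))
        = (\<Sum>x\<in>Fq. quad_char (x - b) * quad_char (x - b))
          + (\<Sum>b'\<in>B - {b}. \<Sum>x\<in>Fq. quad_char (x - b) * quad_char (x - b'))"
      using b by (simp add: sum.remove)
    also have "(\<Sum>x\<in>Fq. quad_char (x - b) * quad_char (x - b)) = int q - 1"
      using b B by (intro quad_char_shift_square_sum) auto
    also have "(\<Sum>b'\<in>B - {b}. \<Sum>x\<in>Fq. quad_char (x - b) * quad_char (x - b')) = (\<Sum>b'\<in>B - {b}. -1)"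
      by (rule sum.cong) (use b B in \<open>auto intro!: quad_char_shift_correlation\<close>)
    also have "(\<Sum>b'\<in>B - {b}. -1::int) = 1 - int (card B)"
      using b card_gt_0_iff[of B] by (auto simp: card_Diff_singleton of_nat_diff)
    finally show "(\<Sum>b'\<in>B. \<Sum>x\<in>Fq. quad_char (x - b) * quad_char (x - b')) = int q - int (card B)"
      by simp
  qed simp
  finally show ?thesis by (simp add: algebra_simps)
qed

text \<open>Each \<open>a \<in> A\<close> contributes \<open>card B ^ 2\<close> to the sum of squares above.\<close>
lemma card_bound_if_differences_square:
  assumes A: "A \<subseteq> Fq" and B: "B \<subseteq> Fq" and AB: "\<forall>a\<in>A. \<forall>b\<in>B. a - b \<in> Fq_powers 2"
  shows "card A * (card B * card B) \<le> card B * (q - card B)"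
proof -
  have "(\<Sum>b\<in>B. quad_char (a - b)) = int (card B)" if "a \<in> A" for a
    using AB that by (simp add: quad_char_Fq_powers_2)
  then have "int (card A) * (int (card B) * int (card B)) = (\<Sum>a\<in>A. (\<Sum>b\<in>B. quad_char (a - b)) ^ 2)"
    by (simp add: power2_eq_square)
  also have "\<dots> \<le> (\<Sum>x\<in>Fq. (\<Sum>b\<in>B. quad_char (x - b)) ^ 2)" by (rule sum_mono2) (use A in auto)
  also have "\<dots> = int (card B * (q - card B))"
    using sum_square_quad_char_sums[OF B] card_mono[OF _ B] card_Fq by (simp add: of_nat_diff)
  finally show ?thesis by (simp only: of_nat_le_iff flip: of_nat_mult)
qed

section \<open>Shifted squares force \<open>m = 2 k\<close>\<close>
lemma card_Fq_powers_bound_if_shifted_squares: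
  assumes n: "n ^ q = n" "n \<noteq> 0"
    and squares: "\<forall>z\<in>Fq_powers (2 * e). z - n \<in> Fq_powers 2"
  shows "card (Fq_powers (2 * e)) * card (Fq_powers (2 * e)) + card (Fq_powers (2 * e)) \<le> q"
proof -
  define H nH where "H = Fq_powers (2 * e)" and "nH = (\<lambda>h. n * h) ` H"
  have H_Fq: "H \<subseteq> Fq - {0}" unfolding H_def by (rule Fq_powers_subset)
  then have nH_Fq: "nH \<subseteq> Fq" using n(1) by (auto simp: nH_def power_mult_distrib)
  have differences: "\<forall>z\<in>H. \<forall>y\<in>nH. z - y \<in> Fq_powers 2"
  proof (intro ballI)
    fix z y assume z: "z \<in> H" and "y \<in> nH"
    then obtain h where h: "h \<in> H" "y = n * h" by (auto simp: nH_def)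
    then have "h \<noteq> 0" using H_Fq by blast
    have "h \<in> Fq_powers 2"
      using h(1) Fq_powers_subset[of e] unfolding H_def Fq_powers_double Fq_powers_def[of 2]
      by blast
    moreover have "z / h - n \<in> Fq_powers 2"
      using squares Fq_powers_divide z h(1) unfolding H_def by blast
    moreover have "z - y = h * (z / h - n)" using \<open>h \<noteq> 0\<close> h(2) by (simp add: field_simps)
    ultimately show "z - y \<in> Fq_powers 2" by (simp add: Fq_powers_mult)
  qed
  have "H \<subseteq> Fq" using H_Fq by blast
  then have "card H * (card nH * card nH) \<le> card nH * (q - card nH)"
    by (rule card_bound_if_differences_square[OF _ nH_Fq differences])
  moreover have "card nH = card H"
    using n(2) unfolding nH_def by (intro card_image) (auto intro: inj_onI)
  ultimately have "card H * (card H * card H) \<le> card H * (q - card H)" by simp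
  moreover have "1 \<in> H" unfolding H_def Fq_powers_def by (rule image_eqI[of _ _ 1]) auto
  then have "0 < card H" by (auto simp: card_gt_0_iff)
  ultimately have "card H * card H \<le> q - card H" by (simp add: mult_le_cancel1)
  moreover have "card H \<le> q" using card_mono[of Fq H] \<open>H \<subseteq> Fq\<close> card_Fq by simp
  ultimately show ?thesis unfolding H_def[symmetric] by linarith
qed

lemma frobenius_fixed_iterate: "(x::'a) ^ (p ^ a) = x \<Longrightarrow> x ^ (p ^ (a * j)) = x"
proof (induction j)
  case (Suc j)
  have "x ^ (p ^ (a * Suc j)) = (x ^ (p ^ (a * j))) ^ (p ^ a)"
    by (simp add: power_add power_mult[symmetric] mult.commute)
  then show ?case using Suc by simp
qed simp

lemma frobenius_fixed_gcd:
  assumes "(x::'a) ^ (p ^ a) = x" "x ^ (p ^ b) = x" "0 < a"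
  shows "x ^ (p ^ gcd a b) = x"
proof -
  obtain i j where ij: "a * i = b * j + gcd a b" using bezout_nat[of a b] assms(3) by auto
  have "x = x ^ (p ^ (a * i))" using frobenius_fixed_iterate[OF assms(1)] by simp
  also have "\<dots> = (x ^ (p ^ (b * j))) ^ (p ^ gcd a b)"
    unfolding ij by (simp add: power_add power_mult[symmetric])
  also have "\<dots> = x ^ (p ^ gcd a b)" using frobenius_fixed_iterate[OF assms(2)] by simp
  finally show ?thesis by simp
qed

text \<open>These roots of unity lie in the subfield of order \<open>p ^ gcd k m\<close>.\<close>
lemma card_Fq_roots_of_unity_le:
  assumes "0 < k"
  shows "card {w\<in>Fq - {0}. w ^ (p ^ k - 1) = 1} \<le> p ^ gcd k m - 1"
proof -
  let ?g = "gcd k m"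
  have "card {w\<in>Fq - {0}. w ^ (p ^ k - 1) = 1} \<le> card ({w::'a. w ^ (p ^ ?g) = w} - {0})"
  proof (intro card_mono subsetI)
    fix w assume w: "w \<in> {w\<in>Fq - {0}. w ^ (p ^ k - 1) = 1}"
    have "Suc (p ^ k - 1) = p ^ k" using p_power_ge_3[OF assms] by simp
    then have "w ^ (p ^ k) = w" using w power_Suc[of w "p ^ k - 1"] by simp
    then show "w \<in> {w. w ^ (p ^ ?g) = w} - {0}"
      using w frobenius_fixed_gcd[of w k m] assms q_eq by auto
  qed simp
  also have "\<dots> \<le> p ^ ?g - 1"
  proof -
    have "1 < p ^ ?g" using p_power_ge_3[of ?g] assms by simp
    moreover have "(0::'a) ^ (p ^ ?g) = 0" using prime_gt_0_nat[OF prime_p] by simp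
    ultimately show ?thesis
      using card_roots_power_plus_linear[of "p ^ ?g" "- 1 :: 'a"] by (simp add: card_Diff_singleton)
  qed
  finally show ?thesis .
qed

lemma card_Fq_powers_lower_bound:
  assumes "0 < k"
  shows "q - 1 \<le> 2 * card (Fq_powers (2 * (p ^ k - 1))) * (p ^ gcd k m - 1)"
proof -
  let ?e = "p ^ k - 1" and ?g = "gcd k m"
  have "card (Fq - {0}) \<le> card (Fq_powers ?e) * card {w\<in>Fq - {0}. w ^ ?e = 1}"
    unfolding Fq_powers_def
    by (rule card_le_card_power_image_mult) (auto simp: power_divide power_mult_distrib)
  also have "\<dots> \<le> card (Fq_powers ?e) * (p ^ ?g - 1)"
    using card_Fq_roots_of_unity_le[OF assms] by (rule mult_le_mono2)
  finally have "q - 1 \<le> card (Fq_powers ?e) * (p ^ ?g - 1)"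
    using card_Fq zero_in_Fq by (simp add: card_Diff_singleton)
  moreover have "card (Fq_powers ?e) \<le> card (Fq_powers (2 * ?e)) * 2"
    unfolding Fq_powers_double
  proof (rule card_le_card_image_mult)
    fix y assume "y \<in> Fq_powers ?e"
    have "{y' \<in> Fq_powers ?e. y' ^ 2 = y ^ 2} \<subseteq> {y, -y}" by (auto simp: power2_eq_iff)
    moreover have "card {y, -y} \<le> 2" by (simp add: card_insert_if)
    ultimately show "card {y' \<in> Fq_powers ?e. y' ^ 2 = y ^ 2} \<le> 2"
      by (meson card_mono finite.emptyI finite.insertI le_trans)
  qed (simp add: Fq_powers_def)
  then have "card (Fq_powers ?e) * (p ^ ?g - 1) \<le> card (Fq_powers (2 * ?e)) * 2 * (p ^ ?g - 1)"
    by (rule mult_le_mono1)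
  ultimately have "q - 1 \<le> card (Fq_powers (2 * ?e)) * 2 * (p ^ ?g - 1)" by (rule le_trans)
  then show ?thesis by (simp add: mult_ac)
qed

lemma m_eq_2k_if_shifted_squares:
  assumes k: "0 < k" "k < m" and n: "n ^ q = n" "n \<noteq> 0"
    and squares: "\<forall>z\<in>Fq_powers (2 * (p ^ k - 1)). z - n \<in> Fq_powers 2"
  shows "m = 2 * k"
proof -
  define g where "g = gcd k m"
  obtain D where D: "m = g * D" using gcd_dvd2[of k m] unfolding g_def dvd_def by blast
  obtain j where j: "k = g * j" using gcd_dvd1[of k m] unfolding g_def dvd_def by blast
  have "0 < g" using k by (simp add: g_def)
  then have "j < D" "0 < j" using k j D by auto
  have q_gD: "(p ^ g) ^ D = q" using q_eq D by (simp add: power_mult)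
  have "D \<le> 2"
  proof (rule exponent_le_2_if_square_bound)
    show "3 \<le> p ^ g" using p_power_ge_3[OF \<open>0 < g\<close>] .
    show "(p ^ g) ^ D - 1 \<le> 2 * card (Fq_powers (2 * (p ^ k - 1))) * (p ^ g - 1)"
      unfolding q_gD unfolding g_def by (rule card_Fq_powers_lower_bound[OF k(1)])
    show "card (Fq_powers (2 * (p ^ k - 1))) * card (Fq_powers (2 * (p ^ k - 1)))
        + card (Fq_powers (2 * (p ^ k - 1))) \<le> (p ^ g) ^ D"
      unfolding q_gD by (rule card_Fq_powers_bound_if_shifted_squares[OF n squares])
  qed
  with \<open>j < D\<close> \<open>0 < j\<close> have "D = 2" "j = 1" by auto
  then show ?thesis using D j by simp
qed

end

locale field_q2_m_eq_2k = field_q2 p m q field_type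
  for p m q :: nat and field_type :: "'a::{field,finite} itself" +
  fixes k :: nat
  assumes m_eq_2k: "m = 2 * k" and k_pos: "0 < k"
begin

abbreviation r :: nat where "r \<equiv> p ^ k"

definition s :: nat where
  "s = (r + 1) div 2"

lemma r_ge_3: "3 \<le> r"
  using p_power_ge_3[OF k_pos] .

lemma r_plus_one: "r + 1 = 2 * s"
  using odd_p by (simp add: s_def)

lemma q_minus_one: "q - 1 = 2 * (r - 1) * s"
proof -
  have "q = r * r" using m_eq_2k q_eq by (simp add: power_add mult_2)
  then have "q - 1 = (r - 1) * (r + 1)" using r_ge_3 by (simp add: algebra_simps)
  then show ?thesis by (subst (asm) r_plus_one) simp
qed

lemma of_nat_s_nonzero: "(of_nat s :: 'a) \<noteq> 0"
proof
  assume "(of_nat s :: 'a) = 0"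
  then have "(of_nat (r + 1) :: 'a) = 0" unfolding r_plus_one by simp
  moreover have "(of_nat p :: 'a) = 0" by (simp add: of_nat_eq_0_iff_char_dvd CHAR_eq)
  ultimately show False using k_pos by (simp add: power_0_left)
qed

lemma power_r_plus_one: "(x::'a) ^ (r + 1) = (x ^ s) ^ 2"
  by (simp only: r_plus_one mult.commute[of 2 s] power_mult)

lemma Fq_powers_eq_roots_of_unity_s:
  "Fq_powers (2 * (r - 1)) = {z. z ^ s = 1}" "card {z::'a. z ^ s = 1} = s"
  using Fq_powers_eq_roots_of_unity q_minus_one by metis+

text \<open>For \<open>z ^ s = 1\<close> the element \<open>A = z - n\<close> satisfies \<open>A ^ r = - A / (z n)\<close>, hence
  \<open>A ^ ((q - 1) div 2) = (-1) ^ s / (z ^ s n ^ s) = 1\<close>.\<close>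
lemma shifted_squares_if_conditions:
  assumes r4: "r mod 4 = 1" and n: "n ^ s = -1"
  shows "\<forall>z\<in>Fq_powers (2 * (r - 1)). z - n \<in> Fq_powers 2"
proof
  fix z assume "z \<in> Fq_powers (2 * (r - 1))"
  then have zs: "z ^ s = 1" using Fq_powers_eq_roots_of_unity_s by simp
  have "odd s" using r4 r_plus_one by presburger
  have zr1: "z ^ (r + 1) = 1" and nr1: "n ^ (r + 1) = 1"
    using zs n power_r_plus_one[of z] power_r_plus_one[of n] by simp_all
  then have "z \<noteq> 0" "n \<noteq> 0" by auto
  have "z \<noteq> n" using zs n one_neq_minus_one by auto
  define A where "A = z - n"
  have "A \<noteq> 0" using \<open>z \<noteq> n\<close> by (simp add: A_def)
  have "A ^ r = z ^ r - n ^ r" unfolding A_def by (rule frobenius_diff)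
  also have "\<dots> = 1 / z - 1 / n"
    using zr1 nr1 \<open>z \<noteq> 0\<close> \<open>n \<noteq> 0\<close> by (simp add: field_simps)
  also have "\<dots> = A * (- 1 / (z * n))" using \<open>z \<noteq> 0\<close> \<open>n \<noteq> 0\<close> by (simp add: A_def field_simps)
  finally have Ar: "A ^ r = A * (- 1 / (z * n))" .
  have "A ^ (r - 1) = A ^ r / A" using \<open>A \<noteq> 0\<close> r_ge_3 by (simp add: power_diff)
  then have A_power: "A ^ (r - 1) = - 1 / (z * n)" using \<open>A \<noteq> 0\<close> Ar by simp
  have "A ^ ((q - 1) div 2) = (A ^ (r - 1)) ^ s" using q_minus_one by (simp add: power_mult)
  also have "\<dots> = (- 1) ^ s / (z ^ s * n ^ s)"
    unfolding A_power by (simp only: power_divide power_mult_distrib)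
  also have "\<dots> = 1" using zs n \<open>odd s\<close> by simp
  finally show "z - n \<in> Fq_powers 2" using Euler_criterion by (simp add: A_def)
qed

lemma Euler_power_if_shifted_squares:
  assumes squares: "\<forall>z\<in>Fq_powers (2 * (r - 1)). z - n \<in> Fq_powers 2" and z: "z ^ s = 1"
  shows "(z - n) ^ ((r - 1) * s) = 1"
  using squares z Fq_powers_eq_roots_of_unity_s Euler_criterion[of "z - n"] q_minus_one
  by (simp add: mult.assoc)

text \<open>Since \<open>z ^ r = 1 / z\<close>, the Frobenius \<open>x \<mapsto> x ^ r\<close> turns Euler's criterion for \<open>z - n\<close>
  into an identity between \<open>s\<close>-th powers of two linear functions of \<open>z\<close>.\<close>
lemma power_identity_if_shifted_squares:
  assumes squares: "\<forall>z\<in>Fq_powers (2 * (r - 1)). z - n \<in> Fq_powers 2" and z: "z ^ s = 1"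
  shows "(1 - n ^ r * z) ^ s = (z - n) ^ s"
proof -
  have "z * z ^ r = 1" using z power_r_plus_one[of z] by simp
  then have "1 - n ^ r * z = z * (z - n) ^ r" by (simp add: frobenius_diff algebra_simps)
  moreover have "r * s = (r - 1) * s + s" using r_ge_3 by (simp add: diff_mult_distrib)
  ultimately have "(1 - n ^ r * z) ^ s = z ^ s * ((z - n) ^ ((r - 1) * s) * (z - n) ^ s)"
    by (simp only: power_mult_distrib power_mult[symmetric] power_add)
  then show ?thesis using z Euler_power_if_shifted_squares[OF squares z] by simp
qed

lemma minus_power_s_if_shifted_squares:
  assumes "n \<noteq> 0" and squares: "\<forall>z\<in>Fq_powers (2 * (r - 1)). z - n \<in> Fq_powers 2"
  shows "(- n) ^ s = 1"
proof -
  have "- (n ^ r) = (- n) ^ (s - 1)"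
    using linear_coeff_eq_if_powers_agree_on_roots_of_unity[of s "- (n ^ r)" n]
      power_identity_if_shifted_squares[OF squares] of_nat_s_nonzero
      Fq_powers_eq_roots_of_unity_s(2) r_plus_one r_ge_3
    by simp
  moreover have "- (n ^ r) = (- n) ^ r" using odd_p by (simp add: power_minus_odd)
  moreover have "r = (s - 1) + s" using r_plus_one by simp
  then have "(- n) ^ r = (- n) ^ (s - 1) * (- n) ^ s" by (simp only: power_add)
  ultimately show ?thesis using \<open>n \<noteq> 0\<close> by simp
qed

lemma conditions_if_shifted_squares:
  assumes "n \<noteq> 0" and squares: "\<forall>z\<in>Fq_powers (2 * (r - 1)). z - n \<in> Fq_powers 2"
  shows "r mod 4 = 1 \<and> n ^ s = -1"
proof -
  have "n ^ (r + 1) = (- n) ^ (r + 1)" unfolding r_plus_one by simp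
  also have "\<dots> = 1"
    using minus_power_s_if_shifted_squares[OF assms] power_r_plus_one[of "- n"] by simp
  finally have nr1: "n ^ (r + 1) = 1" .
  have "n ^ s \<noteq> 1"
  proof
    assume "n ^ s = 1"
    then have "n - n \<in> Fq_powers 2" using squares Fq_powers_eq_roots_of_unity_s by blast
    then show False using Fq_powers_subset by auto
  qed
  moreover have "(n ^ s) ^ 2 = 1" using nr1 power_r_plus_one[of n] by simp
  ultimately have ns: "n ^ s = -1" by (simp add: power2_eq_1_iff)
  define B where "B = 1 - n"
  have B_Euler: "B ^ ((r - 1) * s) = 1"
    using Euler_power_if_shifted_squares[OF squares, of 1] by (simp add: B_def)
  then have "B \<noteq> 0" using r_ge_3 r_plus_one by (auto simp: power_0_left)
  have "B ^ r = 1 - n ^ r" unfolding B_def using frobenius_diff[of 1 n k] by simp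
  also have "\<dots> = B * (- 1 / n)" using nr1 \<open>n \<noteq> 0\<close> by (simp add: B_def field_simps)
  finally have Br: "B ^ r = B * (- 1 / n)" .
  have "B ^ (r - 1) = B ^ r / B" using \<open>B \<noteq> 0\<close> r_ge_3 by (simp add: power_diff)
  then have "B ^ (r - 1) = - 1 / n" using \<open>B \<noteq> 0\<close> Br by simp
  then have "(- 1 / n) ^ s = 1" using B_Euler by (simp add: power_mult)
  then have "(- 1) ^ s = n ^ s" using \<open>n \<noteq> 0\<close> by (simp only: power_divide) simp
  then have "odd s" using ns one_neq_minus_one by auto
  then have "r mod 4 = 1" using r_plus_one by presburger
  then show ?thesis using ns by simp
qed

lemma shifted_squares_iff:
  assumes "n \<noteq> 0"
  shows "(\<forall>z\<in>Fq_powers (2 * (r - 1)). z - n \<in> Fq_powers 2) \<longleftrightarrow> r mod 4 = 1 \<and> n ^ s = -1"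
  using conditions_if_shifted_squares[OF assms] shifted_squares_if_conditions by blast

end

section \<open>Reduction of planarity to shifted squares\<close>

locale planar_setting = field_q2 p m q field_type
  for p m q :: nat and field_type :: "'a::{field,finite} itself" +
  fixes b c :: 'a and k :: nat
  assumes norms_differ: "b ^ (q + 1) \<noteq> c ^ (q + 1)"
begin

definition L :: "'a \<Rightarrow> 'a" where
  "L u = b * u ^ q + c * u"

definition f :: "'a \<Rightarrow> 'a" where
  "f x = x ^ (q + 1) + L (x ^ 2) ^ p ^ k"

definition polar :: "'a \<Rightarrow> 'a \<Rightarrow> 'a" where
  "polar x y = x ^ q * y + x * y ^ q + 2 * L (x * y) ^ p ^ k"

definition \<Delta> :: 'a where
  "\<Delta> = c ^ (q + 1) - b ^ (q + 1)"

text \<open>\<open>d\<close> is the preimage of \<open>1\<close> under the \<open>Fq\<close>-linear bijection \<open>L\<close>.\<close>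
definition d :: 'a where
  "d = (c ^ q - b) / \<Delta>"

definition n :: 'a where
  "n = d ^ (q + 1)"

lemma f_polar: "f (x + y) = f x + f y + polar x y"
proof -
  have add_r: "(u + w :: 'a) ^ p ^ k = u ^ p ^ k + w ^ p ^ k" for u w by (rule frobenius_add)
  have "(x + y) ^ 2 = x ^ 2 + 2 * (x * y) + y ^ 2" by (simp add: power2_eq_square algebra_simps)
  then have "L ((x + y) ^ 2) = L (x ^ 2) + 2 * L (x * y) + L (y ^ 2)"
    by (simp add: L_def power_q_add power_mult_distrib power_q_two algebra_simps)
  then have "L ((x + y) ^ 2) ^ p ^ k = L (x ^ 2) ^ p ^ k + 2 * L (x * y) ^ p ^ k + L (y ^ 2) ^ p ^ k"
    by (simp add: add_r power_mult_distrib frobenius_two)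
  moreover have "(x + y) ^ (q + 1) = x ^ (q + 1) + y ^ (q + 1) + (x ^ q * y + x * y ^ q)"
    by (simp add: power_q_add algebra_simps)
  ultimately show ?thesis by (simp add: f_def polar_def algebra_simps)
qed

lemma polar_diff: "polar x y - polar x' y = polar (x - x') y"
proof -
  have L_diff: "L ((x - x') * y) = L (x * y) - L (x' * y)" by (simp add: L_def power_q_diff algebra_simps)
  show ?thesis unfolding polar_def L_diff by (simp add: frobenius_diff power_q_diff algebra_simps)
qed

lemma planar_iff_polar_kernel: "planar f \<longleftrightarrow> (\<forall>x y. y \<noteq> 0 \<longrightarrow> polar x y = 0 \<longrightarrow> x = 0)"
  by (rule planar_iff_trivial_kernel[where f = f and B = polar, OF f_polar polar_diff])

lemma \<Delta>_nonzero: "\<Delta> \<noteq> 0"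
  using norms_differ by (simp add: \<Delta>_def)

lemma \<Delta>_in_Fq: "\<Delta> ^ q = \<Delta>"
  by (simp only: \<Delta>_def power_q_diff norm_in_Fq)

lemma L_inverse: "\<Delta> * u = c ^ q * L u - b * L u ^ q"
  by (simp add: L_def power_q_add power_mult_distrib \<Delta>_def algebra_simps)

lemma L_d: "L d = 1"
proof -
  have "d ^ q = (c - b ^ q) / \<Delta>" unfolding d_def by (simp add: power_divide power_q_diff \<Delta>_in_Fq)
  then have "L d = (b * (c - b ^ q) + c * (c ^ q - b)) / \<Delta>"
    by (simp add: L_def d_def add_divide_distrib)
  also have "b * (c - b ^ q) + c * (c ^ q - b) = \<Delta>" by (simp add: \<Delta>_def algebra_simps)
  finally show ?thesis using \<Delta>_nonzero by simp
qed

lemma L_scale: "s ^ q = s \<Longrightarrow> L (s * d) = s * L d"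
  by (simp add: L_def power_mult_distrib algebra_simps)

lemma eq_L_times_d: "L u ^ q = L u \<Longrightarrow> u = L u * d"
  using L_inverse[of u] \<Delta>_nonzero by (simp add: d_def field_simps)

lemma d_nonzero: "d \<noteq> 0"
  using L_d by (auto simp: L_def zero_in_Fq)

lemma n_in_Fq: "n ^ q = n"
  unfolding n_def by (rule norm_in_Fq)

lemma n_nonzero: "n \<noteq> 0"
  using d_nonzero by (simp add: n_def)

lemma square_p_power_split: "((x::'a) ^ p ^ k) ^ 2 = x ^ 2 * x ^ (2 * (p ^ k - 1))"
proof -
  have "0 < p ^ k" using prime_gt_0_nat[OF prime_p] by simp
  have "(x ^ p ^ k) ^ 2 = x ^ (p ^ k * 2)" by (rule power_mult[symmetric])
  also have "p ^ k * 2 = 2 + 2 * (p ^ k - 1)" using \<open>0 < p ^ k\<close> by linarith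
  also have "x ^ (2 + 2 * (p ^ k - 1)) = x ^ 2 * x ^ (2 * (p ^ k - 1))" by (rule power_add)
  finally show ?thesis .
qed

lemma polar_kernel_iff_norm_trace:
  "(\<exists>x y. x \<noteq> 0 \<and> y \<noteq> 0 \<and> polar x y = 0) \<longleftrightarrow>
   (\<exists>u v. u \<noteq> 0 \<and> v ^ (q + 1) = u ^ (q + 1) \<and> v ^ q + v + 2 * L u ^ p ^ k = 0)"
proof
  assume "\<exists>x y. x \<noteq> 0 \<and> y \<noteq> 0 \<and> polar x y = 0"
  then obtain x y where xy: "x \<noteq> 0" "y \<noteq> 0" "polar x y = 0" by blast
  have conj: "(x * y ^ q) ^ q = x ^ q * y" by (simp add: power_mult_distrib)
  show "\<exists>u v. u \<noteq> 0 \<and> v ^ (q + 1) = u ^ (q + 1) \<and> v ^ q + v + 2 * L u ^ p ^ k = 0"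
  proof (intro exI conjI)
    show "x * y \<noteq> 0" using xy by simp
    have "(y ^ q) ^ (q + 1) = y ^ (q + 1)" by (simp only: power_power_swap[of y q] norm_in_Fq)
    then show "(x * y ^ q) ^ (q + 1) = (x * y) ^ (q + 1)" by (simp only: power_mult_distrib)
    show "(x * y ^ q) ^ q + x * y ^ q + 2 * L (x * y) ^ p ^ k = 0"
      using xy(3) unfolding conj polar_def .
  qed
next
  assume "\<exists>u v. u \<noteq> 0 \<and> v ^ (q + 1) = u ^ (q + 1) \<and> v ^ q + v + 2 * L u ^ p ^ k = 0"
  then obtain u v where u: "u \<noteq> 0" and norm: "v ^ (q + 1) = u ^ (q + 1)"
    and trace: "v ^ q + v + 2 * L u ^ p ^ k = 0" by blast
  have "(v / u) ^ (q + 1) = 1" using norm u by (simp add: power_divide)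
  then obtain y where y: "y \<noteq> 0" "y ^ (q - 1) = v / u" using Hilbert_90 by blast
  define x where "x = u / y"
  have "x * y = u" using y by (simp add: x_def)
  moreover have "x * y ^ q = v"
    using y u q_ge_3 power_Suc[of y "q - 1"] by (simp add: x_def field_simps)
  moreover have "(x * y ^ q) ^ q = x ^ q * y" by (simp add: power_mult_distrib)
  ultimately have "polar x y = 0" using trace by (simp add: polar_def)
  moreover have "x \<noteq> 0" using u y by (simp add: x_def)
  ultimately show "\<exists>x y. x \<noteq> 0 \<and> y \<noteq> 0 \<and> polar x y = 0" using y by blast
qed

lemma L_in_Fq_if_trace:
  assumes trace: "v ^ q + v + 2 * L u ^ p ^ k = 0"
  shows "L u ^ q = L u"
proof -
  have "2 * L u ^ p ^ k = - (v ^ q + v)" using trace by (simp add: eq_neg_iff_add_eq_0 algebra_simps)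
  then have Lr: "L u ^ p ^ k = - (v ^ q + v) / 2" using two_nonzero by (simp add: eq_divide_eq mult.commute)
  have "(- (v ^ q + v) / 2) ^ q = - (v ^ q + v) / 2"
    by (simp add: power_divide power_q_minus power_q_diff power_q_two)
  then have "(L u ^ q) ^ p ^ k = L u ^ p ^ k" by (simp add: power_power_swap[of "L u" q] Lr)
  then show ?thesis by (rule frobenius_inj)
qed

lemma half_difference_square_if_norm_trace:
  assumes norm: "v ^ (q + 1) = u ^ (q + 1)" and trace: "v ^ q + v + 2 * L u ^ p ^ k = 0"
  shows "((v - v ^ q) / 2) ^ 2 = L u ^ 2 * (L u ^ (2 * (p ^ k - 1)) - n)"
proof -
  let ?w = "L u"
  have wF: "?w ^ q = ?w" using trace by (rule L_in_Fq_if_trace)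
  have "u ^ (q + 1) = (?w * d) ^ (q + 1)" using eq_L_times_d[OF wF] by (rule arg_cong)
  also have "\<dots> = ?w ^ 2 * n" using wF by (simp add: n_def power_mult_distrib power2_eq_square)
  finally have norm_v: "v * v ^ q = ?w ^ 2 * n" using norm by simp
  have trace_v: "v + v ^ q = - (2 * ?w ^ p ^ k)"
    using trace by (simp add: eq_neg_iff_add_eq_0 algebra_simps)
  have "(v - v ^ q) ^ 2 = (v + v ^ q) ^ 2 - 4 * (v * v ^ q)" by (simp add: power2_eq_square algebra_simps)
  also have "\<dots> = 2 ^ 2 * ((?w ^ p ^ k) ^ 2 - ?w ^ 2 * n)"
    unfolding trace_v norm_v by (simp add: power_mult_distrib algebra_simps)
  finally have "2 ^ 2 * ((v - v ^ q) / 2) ^ 2 = 2 ^ 2 * (?w ^ 2 * (?w ^ (2 * (p ^ k - 1)) - n))"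
    using two_nonzero by (simp add: power_divide square_p_power_split right_diff_distrib mult.assoc)
  then show ?thesis using mult_left_cancel[OF power_not_zero[OF two_nonzero, of 2]] by blast
qed

text \<open>With \<open>w = L u \<in> Fq\<close>, the element \<open>\<epsilon> = (v - v ^ q) / 2\<close> satisfies \<open>\<epsilon> ^ q = - \<epsilon>\<close>, so a
  square root of \<open>w ^ (2 (p ^ k - 1)) - n = (\<epsilon> / w) ^ 2\<close> in \<open>Fq\<close> would force \<open>\<epsilon> = 0\<close>.\<close>
lemma nonsquare_shift_if_norm_trace:
  assumes u: "u \<noteq> 0" and norm: "v ^ (q + 1) = u ^ (q + 1)"
    and trace: "v ^ q + v + 2 * L u ^ p ^ k = 0"
  shows "\<exists>w. w ^ q = w \<and> w \<noteq> 0 \<and> w ^ (2 * (p ^ k - 1)) - n \<notin> Fq_powers 2"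
proof (intro exI conjI)
  define w \<epsilon> where "w = L u" and "\<epsilon> = (v - v ^ q) / 2"
  show wF: "w ^ q = w" unfolding w_def using trace by (rule L_in_Fq_if_trace)
  then have "u = w * d" using eq_L_times_d[of u] unfolding w_def by blast
  then show "w \<noteq> 0" using u by auto
  have "\<epsilon> ^ q = (v ^ q - v) / 2" by (simp add: \<epsilon>_def power_divide power_q_diff power_q_two)
  then have \<epsilon>_conj: "\<epsilon> ^ q = - \<epsilon>" by (simp only: \<epsilon>_def minus_divide_left minus_diff_eq)
  show "w ^ (2 * (p ^ k - 1)) - n \<notin> Fq_powers 2"
  proof
    assume "w ^ (2 * (p ^ k - 1)) - n \<in> Fq_powers 2"
    then obtain t where t: "t ^ q = t" "t \<noteq> 0" "w ^ (2 * (p ^ k - 1)) - n = t ^ 2"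
      by (auto simp: Fq_powers_def)
    then have "\<epsilon> ^ 2 = (w * t) ^ 2"
      using half_difference_square_if_norm_trace[OF norm trace]
      by (simp add: \<epsilon>_def w_def power_mult_distrib)
    then have "\<epsilon> = w * t \<or> \<epsilon> = - (w * t)" by (simp only: power2_eq_iff)
    then have "\<epsilon> ^ q = \<epsilon>" using wF t(1) by (auto simp: power_mult_distrib power_q_minus)
    then have "\<epsilon> = 0" using \<epsilon>_conj two_nonzero by (simp add: eq_neg_iff_add_eq_0 flip: mult_2)
    then show False using \<open>\<epsilon> = w * t \<or> \<epsilon> = - (w * t)\<close> \<open>w \<noteq> 0\<close> t(2) by auto
  qed
qed

lemma norm_trace_if_nonsquare_shift:
  assumes s: "s ^ q = s" "s \<noteq> 0" and nonsquare: "s ^ (2 * (p ^ k - 1)) - n \<notin> Fq_powers 2"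
  shows "\<exists>u v. u \<noteq> 0 \<and> v ^ (q + 1) = u ^ (q + 1) \<and> v ^ q + v + 2 * L u ^ p ^ k = 0"
proof -
  define \<delta> where "\<delta> = s ^ (2 * (p ^ k - 1)) - n"
  have "\<delta> ^ q = \<delta>" using s n_in_Fq by (simp add: \<delta>_def power_q_diff power_power_swap[of s _ q])
  then obtain \<epsilon> where \<epsilon>: "\<epsilon> ^ 2 = \<delta>" "\<epsilon> ^ q = - \<epsilon>"
    using sqrt_of_Fq_nonsquare nonsquare unfolding \<delta>_def by blast
  have sr: "(s ^ p ^ k) ^ q = s ^ p ^ k" using s(1) by (simp add: power_power_swap[of s _ q])
  define u v where "u = s * d" and "v = - (s ^ p ^ k) + s * \<epsilon>"
  have vq: "v ^ q = - (s ^ p ^ k) - s * \<epsilon>"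
    using s(1) sr \<epsilon>(2) by (simp add: v_def power_q_diff power_mult_distrib)
  show ?thesis
  proof (intro exI conjI)
    show "u \<noteq> 0" using s(2) d_nonzero by (simp add: u_def)
    have "v * v ^ q = (s ^ p ^ k) ^ 2 - s ^ 2 * \<epsilon> ^ 2"
      unfolding vq unfolding v_def by (simp add: power2_eq_square algebra_simps)
    then have "v * v ^ q = s ^ 2 * n"
      unfolding square_p_power_split \<epsilon>(1) \<delta>_def by (simp add: algebra_simps)
    moreover have "u ^ (q + 1) = s ^ 2 * n"
      using s(1) by (simp add: u_def n_def power_mult_distrib power2_eq_square)
    ultimately show "v ^ (q + 1) = u ^ (q + 1)" by simp
    have "L u = s" using L_scale[OF s(1)] L_d by (simp add: u_def)
    then show "v ^ q + v + 2 * L u ^ p ^ k = 0" unfolding vq by (simp add: v_def)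
  qed
qed

theorem planar_iff_shifted_squares:
  "planar f \<longleftrightarrow> (\<forall>z\<in>Fq_powers (2 * (p ^ k - 1)). z - n \<in> Fq_powers 2)"
proof -
  have "planar f \<longleftrightarrow> \<not> (\<exists>x y. x \<noteq> 0 \<and> y \<noteq> 0 \<and> polar x y = 0)"
    using planar_iff_polar_kernel by blast
  also have "\<dots> \<longleftrightarrow> \<not> (\<exists>u v. u \<noteq> 0 \<and> v ^ (q + 1) = u ^ (q + 1) \<and> v ^ q + v + 2 * L u ^ p ^ k = 0)"
    by (simp only: polar_kernel_iff_norm_trace)
  also have "\<dots> \<longleftrightarrow> \<not> (\<exists>s. s ^ q = s \<and> s \<noteq> 0 \<and> s ^ (2 * (p ^ k - 1)) - n \<notin> Fq_powers 2)"
    using nonsquare_shift_if_norm_trace norm_trace_if_nonsquare_shift by blast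
  also have "\<dots> \<longleftrightarrow> (\<forall>z\<in>Fq_powers (2 * (p ^ k - 1)). z - n \<in> Fq_powers 2)"
    by (auto simp: Fq_powers_def)
  finally show ?thesis .
qed

lemma n_power_eq_minus_one_iff:
  "n ^ ((p ^ k + 1) div 2) = -1 \<longleftrightarrow>
   normq q (b - c ^ q) ^ ((p ^ k + 1) div 2) = - ((normq q b - normq q c) ^ (p ^ k + 1))"
proof -
  define s where "s = (p ^ k + 1) div 2"
  have two_s: "p ^ k + 1 = 2 * s" using odd_p by (simp add: s_def)
  have "(c ^ q - b) ^ (q + 1) = (- (b - c ^ q)) ^ (q + 1)" by simp
  also have "\<dots> = normq q (b - c ^ q)" unfolding normq_def using odd_q by (intro power_minus_even) simp
  finally have "n = normq q (b - c ^ q) / \<Delta> ^ (q + 1)" by (simp add: n_def d_def power_divide)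
  also have "\<Delta> ^ (q + 1) = \<Delta> ^ 2" using \<Delta>_in_Fq by (simp add: power2_eq_square)
  finally have "n ^ s = normq q (b - c ^ q) ^ s / \<Delta> ^ (2 * s)"
    by (simp add: power_divide power_mult)
  then have "n ^ s = normq q (b - c ^ q) ^ s / \<Delta> ^ (p ^ k + 1)" unfolding two_s .
  moreover have "(normq q b - normq q c) ^ (p ^ k + 1) = (- \<Delta>) ^ (p ^ k + 1)"
    by (simp add: normq_def \<Delta>_def)
  moreover have "(- \<Delta>) ^ (p ^ k + 1) = \<Delta> ^ (p ^ k + 1)" using two_s by (intro power_minus_even) simp
  ultimately show ?thesis using \<Delta>_nonzero by (auto simp: s_def divide_eq_eq)
qed

end

theorem theorem2p4:
  fixes p m k q :: nat and b c :: "'a::{field,finite}"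
  assumes "prime p" and "odd p" and "q = p ^ m"
    and "card (UNIV :: 'a set) = q ^ 2"
    and "0 < k" and "k < m"
    and "normq q b \<noteq> normq q c"
  shows "planar (\<lambda>x. x ^ (q + 1) + (b * (x^2) ^ q + c * x^2) ^ (p ^ k)) \<longleftrightarrow>
           (p ^ k mod 4 = 1 \<and> m = 2 * k \<and>
            normq q (b - c ^ q) ^ ((p ^ k + 1) div 2) =
              - ((normq q b - normq q c) ^ (p ^ k + 1)))"
proof -
  interpret planar_setting p m q "TYPE('a)" b c k
    using assms by unfold_locales (auto simp: normq_def)
  have "(\<lambda>x. x ^ (q + 1) + (b * (x^2) ^ q + c * x^2) ^ (p ^ k)) = f"
    by (simp add: fun_eq_iff f_def L_def)
  then have "planar (\<lambda>x. x ^ (q + 1) + (b * (x^2) ^ q + c * x^2) ^ (p ^ k)) \<longleftrightarrow>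
      (\<forall>z\<in>Fq_powers (2 * (p ^ k - 1)). z - n \<in> Fq_powers 2)"
    using planar_iff_shifted_squares by simp
  also have "\<dots> \<longleftrightarrow> p ^ k mod 4 = 1 \<and> m = 2 * k \<and> n ^ ((p ^ k + 1) div 2) = -1"
  proof (cases "m = 2 * k")
    case True
    then interpret field_q2_m_eq_2k p m q "TYPE('a)" k
      using assms(5) by unfold_locales
    show ?thesis using shifted_squares_iff[OF n_nonzero] True by (simp add: s_def)
  next
    case False
    then show ?thesis using m_eq_2k_if_shifted_squares[OF assms(5,6) n_in_Fq n_nonzero] by blast
  qed
  also have "\<dots> \<longleftrightarrow> p ^ k mod 4 = 1 \<and> m = 2 * k \<and>
      normq q (b - c ^ q) ^ ((p ^ k + 1) div 2) = - ((normq q b - normq q c) ^ (p ^ k + 1))"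
    by (simp only: n_power_eq_minus_one_iff)
  finally show ?thesis .
qed

end
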